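(* Let $X,Y$ be normed spaces, $U\subseteq X$ open nonempty, $\mathcal{W}\subseteq\overline{\mathbb{R}}^U$, $k\in\mathbb{N}$ and $\gamma\in FC^1(U,Y)$. Then $\gamma\in C^{k+1}_{\mathcal{W}}(U,Y)$ if and only if $(D\gamma,\gamma)\in C^k_{\mathcal{W}}(U,L(X,Y))\times C^0_{\mathcal{W}}(U,Y)$. Moreover, the map $C^{k+1}_{\mathcal{W}}(U,Y)\to C^k_{\mathcal{W}}(U,L(X,Y))\times C^0_{\mathcal{W}}(U,Y)$, $\gamma\mapsto(D\gamma,\gamma)$, is a topological embedding; in particular $D:C^{k+1}_{\mathcal{W}}(U,Y)\to C^k_{\mathcal{W}}(U,L(X,Y))$ is continuous.
   Context: $FC^m(U,Y)$: $m$ times continuously Fréchet differentiable maps, $D\gamma:U\to L(X,Y)$ the Fréchet derivative, $L(X,Y)$ with the operator norm. $C^m_{\mathcal W}(U,E)$ (normed $E$): the $\gamma\in FC^m(U,E)$ with $\sup_{x\in U}|f(x)|\,\|D^{(j)}\gamma(x)\|_{op}<\infty$ for all $f\in\mathcal W$, $j\in\mathbb N$, $j\le m$ ($\infty\cdot0=0$), with the locally convex topology of these seminorms. *)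

theory Defs
  imports "HOL-Analysis.Analysis"
begin

(* j-th Frechet derivative of gamma at x, represented as a j-multilinear map
   acting on a direction sequence h (only h 0, ..., h (j-1) are used):
   D^(j+1) gamma(x)(h0,h1,...,hj) = D( y |-> D^j gamma(y)(h1,...,hj) )(x)(h0). *)
fun hderiv :: "nat \<Rightarrow> ('a::real_normed_vector \<Rightarrow> 'b::real_normed_vector)
                 \<Rightarrow> 'a \<Rightarrow> (nat \<Rightarrow> 'a) \<Rightarrow> 'b" where
  "hderiv 0 \<gamma> x h = \<gamma> x"
| "hderiv (Suc j) \<gamma> x h =
     frechet_derivative (\<lambda>y. hderiv j \<gamma> y (\<lambda>i. h (Suc i))) (at x) (h 0)"

definition shift_dir :: "'a \<Rightarrow> (nat \<Rightarrow> 'a) \<Rightarrow> nat \<Rightarrow> 'a" where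
  "shift_dir v h = (\<lambda>i. case i of 0 \<Rightarrow> v | Suc i' \<Rightarrow> h i')"

definition unit_dirs :: "nat \<Rightarrow> (nat \<Rightarrow> 'a::real_normed_vector) set" where
  "unit_dirs j = {h. \<forall>i<j. norm (h i) \<le> 1}"

definition mnorm :: "nat \<Rightarrow> ((nat \<Rightarrow> 'a::real_normed_vector) \<Rightarrow> 'b::real_normed_vector) \<Rightarrow> real" where
  "mnorm j g = (SUP h\<in>unit_dirs j. norm (g h))"

definition multilin_bounded :: "nat \<Rightarrow> ((nat \<Rightarrow> 'a::real_normed_vector) \<Rightarrow> 'b::real_normed_vector) \<Rightarrow> bool" where
  "multilin_bounded j g \<longleftrightarrow>
     (\<forall>i<j. \<forall>h. linear (\<lambda>v. g (h(i := v)))) \<and> (\<exists>B. \<forall>h\<in>unit_dirs j. norm (g h) \<le> B)"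

(* FC^m(U,E): m times continuously Frechet differentiable on U,
   derivatives taken with respect to the operator norm *)
definition FC :: "nat \<Rightarrow> 'a set \<Rightarrow> ('a::real_normed_vector \<Rightarrow> 'b::real_normed_vector) \<Rightarrow> bool" where
  "FC m U \<gamma> \<longleftrightarrow>
     (\<forall>j\<le>m. \<forall>x\<in>U. multilin_bounded j (hderiv j \<gamma> x)) \<and>
     (\<forall>j<m. \<forall>x\<in>U. ((\<lambda>v. mnorm j (\<lambda>h. hderiv j \<gamma> (x + v) h - hderiv j \<gamma> x h
                                          - hderiv (Suc j) \<gamma> x (shift_dir v h)) / norm v)
                     \<longlongrightarrow> 0) (at 0)) \<and>
     (\<forall>j\<le>m. \<forall>x\<in>U. ((\<lambda>y. mnorm j (\<lambda>h. hderiv j \<gamma> y h - hderiv j \<gamma> x h)) \<longlongrightarrow> 0) (at x within U))"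

(* the seminorm  sup_{x in U} |f x| * ||D^j(eta - gamma)(x)||_op  (with inf * 0 = 0 in ereal) *)
definition wsemi :: "'a set \<Rightarrow> ('a \<Rightarrow> ereal) \<Rightarrow> nat \<Rightarrow> ('a::real_normed_vector \<Rightarrow> 'b::real_normed_vector)
                      \<Rightarrow> ('a \<Rightarrow> 'b) \<Rightarrow> ereal" where
  "wsemi U f j \<eta> \<gamma> = (SUP x\<in>U. \<bar>f x\<bar> * ereal (mnorm j (\<lambda>h. hderiv j \<eta> x h - hderiv j \<gamma> x h)))"

definition CW :: "nat \<Rightarrow> 'a set \<Rightarrow> ('a \<Rightarrow> ereal) set \<Rightarrow> ('a::real_normed_vector \<Rightarrow> 'b::real_normed_vector) set" where
  "CW m U W = {\<gamma>. FC m U \<gamma> \<and> (\<forall>f\<in>W. \<forall>j\<le>m. (SUP x\<in>U. \<bar>f x\<bar> * ereal (mnorm j (hderiv j \<gamma> x))) < \<infinity>)}"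

definition CW_top :: "nat \<Rightarrow> 'a set \<Rightarrow> ('a \<Rightarrow> ereal) set \<Rightarrow> ('a::real_normed_vector \<Rightarrow> 'b::real_normed_vector) topology" where
  "CW_top m U W = topology_generated_by
     (insert (CW m U W)
        {{\<eta> \<in> CW m U W. wsemi U f j \<eta> \<gamma> < ereal \<epsilon>} | \<gamma> f j \<epsilon>.
            \<gamma> \<in> CW m U W \<and> f \<in> W \<and> j \<le> m \<and> \<epsilon> > 0})"

definition Dfun :: "('a::real_normed_vector \<Rightarrow> 'b::real_normed_vector) \<Rightarrow> 'a \<Rightarrow> ('a \<Rightarrow>\<^sub>L 'b)" where
  "Dfun \<gamma> x = Blinfun (frechet_derivative \<gamma> (at x))"

end

theory Submission
  imports Defs
begin

(* Currying is isometric: D^j(D\<gamma>)(x)(h)(v) = D^(j+1)\<gamma>(x)(h,v), and the operator norm of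
   h \<mapsto> D^j(D\<gamma>)(x)(h) equals that of D^(j+1)\<gamma>(x).  Multilinearity, Frechet
   remainders and continuity moduli of D\<gamma> of order j therefore correspond to those of \<gamma>
   of order j+1, so D\<gamma> is FC^k exactly when \<gamma> is FC^(k+1), and every seminorm of
   C^(k+1)_W(U,Y) is a seminorm of C^k_W(U,L(X,Y)) pulled back along D or a seminorm of
   C^0_W(U,Y).  Hence \<gamma> \<mapsto> (D\<gamma>, \<gamma>) is continuous, injective and open onto its image. *)

lemma linear_norm_le_of_unit_ball_bound:
  fixes f :: "'a::real_normed_vector \<Rightarrow> 'b::real_normed_vector"
  assumes "linear f" "\<And>v. norm v \<le> 1 \<Longrightarrow> norm (f v) \<le> B"
  shows "norm (f v) \<le> B * norm v"
proof (cases "v = 0")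
  case True
  then show ?thesis using linear_0[OF assms(1)] by simp
next
  case False
  have "f v = norm v *\<^sub>R f (v /\<^sub>R norm v)"
    using linear_scale[OF assms(1), of "norm v" "v /\<^sub>R norm v"] False by simp
  then have "norm (f v) = norm v * norm (f (v /\<^sub>R norm v))" by simp
  also have "\<dots> \<le> norm v * B"
    using assms(2)[of "v /\<^sub>R norm v"] False by (intro mult_left_mono) auto
  finally show ?thesis by (simp add: mult.commute)
qed

lemma bounded_linear_of_unit_ball_bound:
  fixes f :: "'a::real_normed_vector \<Rightarrow> 'b::real_normed_vector"
  assumes "linear f" "\<And>v. norm v \<le> 1 \<Longrightarrow> norm (f v) \<le> B"
  shows "bounded_linear f"
proof (rule bounded_linear_intro[where K=B])
  show "f (x + y) = f x + f y" for x y using linear_add[OF assms(1)] by simp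
  show "f (r *\<^sub>R x) = r *\<^sub>R f x" for r x using linear_scale[OF assms(1)] by simp
  show "norm (f x) \<le> norm x * B" for x
    using linear_norm_le_of_unit_ball_bound[OF assms] by (simp add: mult.commute)
qed

lemma bounded_bilinear_of_unit_ball_bound:
  fixes D :: "'a::real_normed_vector \<Rightarrow> 'c::real_normed_vector \<Rightarrow> 'b::real_normed_vector"
  assumes lin_right: "\<And>v. linear (D v)" and lin_left: "\<And>w. linear (\<lambda>v. D v w)"
    and bound: "\<And>v w. norm v \<le> 1 \<Longrightarrow> norm w \<le> 1 \<Longrightarrow> norm (D v w) \<le> B"
  shows "bounded_bilinear D"
proof
  have "norm (D v w) \<le> B * norm v" if "norm w \<le> 1" for v :: 'a and w :: 'c
    by (rule linear_norm_le_of_unit_ball_bound[OF lin_left]) (use bound that in auto)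
  then have "norm (D v w) \<le> B * norm v * norm w" for v :: 'a and w :: 'c
    by (intro linear_norm_le_of_unit_ball_bound[OF lin_right]) simp
  then show "\<exists>K. \<forall>v w. norm (D v w) \<le> norm v * norm w * K"
    by (intro exI[of _ B]) (simp add: ac_simps)
qed (simp_all add: linear_add[OF lin_left] linear_add[OF lin_right]
       linear_scale[OF lin_left] linear_scale[OF lin_right])

lemma all_le_Suc_conv: "(\<forall>j\<le>Suc k. P j) \<longleftrightarrow> P 0 \<and> (\<forall>j\<le>k. P (Suc j))"
  using All_less_Suc2[of "Suc k" P] by (simp add: less_Suc_eq_le)

lemma all_le_Suc_shift_iff:
  assumes "P 0" "\<And>j. j \<le> k \<Longrightarrow> P (Suc j) \<longleftrightarrow> Q j"
  shows "(\<forall>j\<le>Suc k. P j) \<longleftrightarrow> (\<forall>j\<le>k. Q j)"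
  using assms by (auto simp: all_le_Suc_conv)

lemma all_less_Suc_shift_iff:
  assumes "P 0" "\<And>j. j < k \<Longrightarrow> P (Suc j) \<longleftrightarrow> Q j"
  shows "(\<forall>j<Suc k. P j) \<longleftrightarrow> (\<forall>j<k. Q j)"
  using assms by (auto simp: All_less_Suc2)

section \<open>Multilinear maps on direction sequences\<close>

definition dir_scale :: "(nat \<Rightarrow> 'a::real_normed_vector) \<Rightarrow> nat \<Rightarrow> real" where
  "dir_scale h i = max 1 (norm (h i))"

definition normalize_dirs :: "nat \<Rightarrow> (nat \<Rightarrow> 'a::real_normed_vector) \<Rightarrow> nat \<Rightarrow> 'a" where
  "normalize_dirs n h = (\<lambda>i. if i < n then h i /\<^sub>R dir_scale h i else h i)"

lemma dir_scale_ge_1: "dir_scale h i \<ge> 1"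
  by (simp add: dir_scale_def)

lemma normalize_dirs_in_unit_dirs: "normalize_dirs n h \<in> unit_dirs n"
proof -
  have "norm (h i /\<^sub>R dir_scale h i) \<le> 1" for i
    using dir_scale_ge_1[of h i] by (simp add: dir_scale_def field_simps)
  then show ?thesis by (auto simp: unit_dirs_def normalize_dirs_def)
qed

lemma multilinear_eq_scale_normalize_dirs:
  fixes g :: "(nat \<Rightarrow> 'a::real_normed_vector) \<Rightarrow> 'b::real_normed_vector"
  assumes "\<And>i h. i < n \<Longrightarrow> linear (\<lambda>v. g (h(i := v)))"
  shows "g h = (\<Prod>i<n. dir_scale h i) *\<^sub>R g (normalize_dirs n h)"
proof -
  have "g h = (\<Prod>i<m. dir_scale h i) *\<^sub>R g (\<lambda>i. if i < m then h i /\<^sub>R dir_scale h i else h i)"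
    if "m \<le> n" for m
    using that
  proof (induction m)
    case 0
    then show ?case by simp
  next
    case (Suc m)
    define hm where "hm = (\<lambda>i. if i < m then h i /\<^sub>R dir_scale h i else h i)"
    have "hm = hm(m := dir_scale h m *\<^sub>R (h m /\<^sub>R dir_scale h m))"
      using dir_scale_ge_1[of h m] by (auto simp: hm_def)
    then have "g hm = dir_scale h m *\<^sub>R g (hm(m := h m /\<^sub>R dir_scale h m))"
      using linear_scale[OF assms[of m hm]] Suc.prems by (metis Suc_le_lessD)
    moreover have "hm(m := h m /\<^sub>R dir_scale h m)
        = (\<lambda>i. if i < Suc m then h i /\<^sub>R dir_scale h i else h i)"
      by (auto simp: hm_def)
    ultimately show ?case using Suc by (simp add: hm_def)
  qed
  then show ?thesis by (simp add: normalize_dirs_def)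
qed

lemma multilin_bounded_bounded_on_ball:
  fixes g :: "(nat \<Rightarrow> 'a::real_normed_vector) \<Rightarrow> 'b::real_normed_vector"
  assumes "multilin_bounded n g"
  shows "\<exists>C. \<forall>h. (\<forall>i<n. norm (h i) \<le> R) \<longrightarrow> norm (g h) \<le> C"
proof -
  obtain B where B: "\<forall>h\<in>unit_dirs n. norm (g h) \<le> B"
    using assms by (auto simp: multilin_bounded_def)
  have lin: "\<And>i h. i < n \<Longrightarrow> linear (\<lambda>v. g (h(i := v)))"
    using assms unfolding multilin_bounded_def by blast
  have "norm (g h) \<le> max 1 R ^ n * max 0 B" if h: "\<forall>i<n. norm (h i) \<le> R" for h
  proof -
    have scale_nonneg: "0 \<le> (\<Prod>i<n. dir_scale h i)"
      by (intro prod_nonneg) (simp add: dir_scale_def)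
    have "g h = (\<Prod>i<n. dir_scale h i) *\<^sub>R g (normalize_dirs n h)"
      by (rule multilinear_eq_scale_normalize_dirs[OF lin])
    then have "norm (g h) = (\<Prod>i<n. dir_scale h i) * norm (g (normalize_dirs n h))"
      using scale_nonneg by simp
    also have "\<dots> \<le> max 1 R ^ n * max 0 B"
    proof (rule mult_mono)
      show "(\<Prod>i<n. dir_scale h i) \<le> max 1 R ^ n"
        by (rule prod_le_power) (use h dir_scale_ge_1 in \<open>auto simp: dir_scale_def\<close>)
      show "norm (g (normalize_dirs n h)) \<le> max 0 B"
        using B normalize_dirs_in_unit_dirs[of n h] by (meson le_max_iff_disj)
    qed simp_all
    finally show ?thesis .
  qed
  then show ?thesis by blast
qed

lemma multilin_bounded_diff_bounded:
  assumes "multilin_bounded n g1" "multilin_bounded n g2"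
  shows "\<exists>C. \<forall>h\<in>unit_dirs n. norm (g1 h - g2 h) \<le> C"
proof -
  obtain B1 B2 where B: "\<forall>h\<in>unit_dirs n. norm (g1 h) \<le> B1" "\<forall>h\<in>unit_dirs n. norm (g2 h) \<le> B2"
    using assms unfolding multilin_bounded_def by blast
  have "norm (g1 h - g2 h) \<le> B1 + B2" if "h \<in> unit_dirs n" for h
    using B that norm_triangle_ineq4[of "g1 h" "g2 h"] by fastforce
  then show ?thesis by blast
qed

lemma unit_dirs_zero: "(\<lambda>i. 0) \<in> unit_dirs j"
  by (simp add: unit_dirs_def)

lemma unit_dirs_upd: "h \<in> unit_dirs j \<Longrightarrow> norm w \<le> 1 \<Longrightarrow> h(j := w) \<in> unit_dirs (Suc j)"
  by (simp add: unit_dirs_def less_Suc_eq)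

lemma mnorm_ge:
  assumes "\<And>h. h \<in> unit_dirs j \<Longrightarrow> norm (g h) \<le> B" "h \<in> unit_dirs j"
  shows "norm (g h) \<le> mnorm j g"
proof -
  have "bdd_above ((\<lambda>h. norm (g h)) ` unit_dirs j)"
    by (rule bdd_aboveI2[where M=B]) (rule assms(1))
  then show ?thesis unfolding mnorm_def by (rule cSUP_upper[OF assms(2)])
qed

lemma mnorm_le:
  assumes "\<And>h. h \<in> unit_dirs j \<Longrightarrow> norm (g h) \<le> B"
  shows "mnorm j g \<le> B"
proof -
  have "unit_dirs j \<noteq> {}" using unit_dirs_zero by blast
  then show ?thesis unfolding mnorm_def by (rule cSUP_least) (rule assms)
qed

lemma mnorm_nonneg:
  assumes "\<And>h. h \<in> unit_dirs j \<Longrightarrow> norm (g h) \<le> B"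
  shows "0 \<le> mnorm j g"
proof -
  have "norm (g (\<lambda>i. 0)) \<le> mnorm j g" by (rule mnorm_ge[OF assms unit_dirs_zero])
  then show ?thesis using norm_ge_zero[of "g (\<lambda>i. 0)"] by linarith
qed

lemma mnorm_diff_triangle:
  fixes a b c :: "(nat \<Rightarrow> 'a::real_normed_vector) \<Rightarrow> 'b::real_normed_vector"
  assumes "\<And>h. h \<in> unit_dirs j \<Longrightarrow> norm (a h - b h) \<le> B1"
    "\<And>h. h \<in> unit_dirs j \<Longrightarrow> norm (b h - c h) \<le> B2"
  shows "mnorm j (\<lambda>h. a h - c h) \<le> mnorm j (\<lambda>h. a h - b h) + mnorm j (\<lambda>h. b h - c h)"
proof (rule mnorm_le)
  fix h :: "nat \<Rightarrow> 'a" assume h: "h \<in> unit_dirs j"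
  show "norm (a h - c h) \<le> mnorm j (\<lambda>h. a h - b h) + mnorm j (\<lambda>h. b h - c h)"
    by (rule norm_diff_triangle_le) (rule mnorm_ge[OF _ h], rule assms, assumption)+
qed

lemma mnorm_curry:
  fixes \<Phi> :: "(nat \<Rightarrow> 'a::real_normed_vector) \<Rightarrow> ('a \<Rightarrow>\<^sub>L 'b::real_normed_vector)"
    and \<psi> :: "(nat \<Rightarrow> 'a) \<Rightarrow> 'b"
  assumes curry: "\<And>h w. h \<in> unit_dirs j \<Longrightarrow> blinfun_apply (\<Phi> h) w = \<psi> (h(j := w))"
    and bound: "\<And>h. h \<in> unit_dirs (Suc j) \<Longrightarrow> norm (\<psi> h) \<le> B"
  shows "mnorm j \<Phi> = mnorm (Suc j) \<psi>"
    and "\<And>h. h \<in> unit_dirs j \<Longrightarrow> norm (\<Phi> h) \<le> mnorm (Suc j) \<psi>"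
proof -
  define M where "M = mnorm (Suc j) \<psi>"
  have M_nonneg: "0 \<le> M" unfolding M_def by (rule mnorm_nonneg[OF bound])
  have Phi_le: "norm (\<Phi> h) \<le> M" if h: "h \<in> unit_dirs j" for h
  proof (rule norm_blinfun_bound[OF M_nonneg])
    fix w
    show "norm (blinfun_apply (\<Phi> h) w) \<le> M * norm w"
    proof (rule linear_norm_le_of_unit_ball_bound)
      show "linear (blinfun_apply (\<Phi> h))"
        using blinfun.bounded_linear_right bounded_linear.linear by blast
      fix v :: 'a assume "norm v \<le> 1"
      then show "norm (blinfun_apply (\<Phi> h) v) \<le> M"
        using curry[OF h] mnorm_ge[OF bound unit_dirs_upd[OF h]] by (simp add: M_def)
    qed
  qed
  then show "\<And>h. h \<in> unit_dirs j \<Longrightarrow> norm (\<Phi> h) \<le> mnorm (Suc j) \<psi>" by (simp add: M_def)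
  have "M \<le> mnorm j \<Phi>" unfolding M_def
  proof (rule mnorm_le)
    fix h :: "nat \<Rightarrow> 'a" assume h: "h \<in> unit_dirs (Suc j)"
    then have hj: "h \<in> unit_dirs j" "norm (h j) \<le> 1" by (auto simp: unit_dirs_def)
    have "\<psi> h = blinfun_apply (\<Phi> h) (h j)" using curry[OF hj(1), of "h j"] by simp
    then have "norm (\<psi> h) \<le> norm (\<Phi> h) * norm (h j)" by (simp add: norm_blinfun)
    also have "\<dots> \<le> norm (\<Phi> h)" using hj(2) by (simp add: mult_left_le)
    also have "\<dots> \<le> mnorm j \<Phi>" by (rule mnorm_ge[OF Phi_le hj(1)])
    finally show "norm (\<psi> h) \<le> mnorm j \<Phi>" .
  qed
  moreover have "mnorm j \<Phi> \<le> M" by (rule mnorm_le[OF Phi_le])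
  ultimately show "mnorm j \<Phi> = mnorm (Suc j) \<psi>" by (simp add: M_def)
qed

lemma multilin_bounded_curry:
  fixes \<Phi> :: "(nat \<Rightarrow> 'a::real_normed_vector) \<Rightarrow> ('a \<Rightarrow>\<^sub>L 'b::real_normed_vector)"
    and \<psi> :: "(nat \<Rightarrow> 'a) \<Rightarrow> 'b"
  assumes curry: "\<And>h w. blinfun_apply (\<Phi> h) w = \<psi> (h(j := w))"
    and \<psi>: "multilin_bounded (Suc j) \<psi>"
  shows "multilin_bounded j \<Phi>"
proof -
  obtain B where B: "\<And>h. h \<in> unit_dirs (Suc j) \<Longrightarrow> norm (\<psi> h) \<le> B"
    using \<psi> unfolding multilin_bounded_def by blast
  have "linear (\<lambda>v. \<Phi> (h(i := v)))" if i: "i < j" for i h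
  proof -
    have apply_eq: "blinfun_apply (\<Phi> (h(i := c))) w = \<psi> ((h(j := w))(i := c))" for c w
      using curry[of "h(i := c)" w] i by (simp add: fun_upd_twist)
    have lin: "linear (\<lambda>v. \<psi> ((h(j := w))(i := v)))" for w
      using \<psi> i unfolding multilin_bounded_def by simp
    show ?thesis
    proof (rule linearI)
      show "\<Phi> (h(i := a + b)) = \<Phi> (h(i := a)) + \<Phi> (h(i := b))" for a b
        by (rule blinfun_eqI) (simp add: apply_eq blinfun.add_left linear_add[OF lin])
      show "\<Phi> (h(i := r *\<^sub>R a)) = r *\<^sub>R \<Phi> (h(i := a))" for r a
        by (rule blinfun_eqI) (simp add: apply_eq linear_scale[OF lin] blinfun.scaleR_left)
    qed
  qed
  moreover have "norm (\<Phi> h) \<le> mnorm (Suc j) \<psi>" if "h \<in> unit_dirs j" for h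
    by (rule mnorm_curry(2)[OF curry B that])
  ultimately show ?thesis unfolding multilin_bounded_def by blast
qed

lemma multilin_bounded_uncurry:
  fixes \<Phi> :: "(nat \<Rightarrow> 'a::real_normed_vector) \<Rightarrow> ('a \<Rightarrow>\<^sub>L 'b::real_normed_vector)"
    and \<psi> :: "(nat \<Rightarrow> 'a) \<Rightarrow> 'b"
  assumes curry: "\<And>h w. blinfun_apply (\<Phi> h) w = \<psi> (h(j := w))"
    and \<Phi>: "multilin_bounded j \<Phi>"
  shows "multilin_bounded (Suc j) \<psi>"
proof -
  have lin: "\<And>i h. i < j \<Longrightarrow> linear (\<lambda>v. \<Phi> (h(i := v)))"
    and "\<exists>B. \<forall>h\<in>unit_dirs j. norm (\<Phi> h) \<le> B"
    using \<Phi> unfolding multilin_bounded_def by auto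
  then obtain B where B: "\<And>h. h \<in> unit_dirs j \<Longrightarrow> norm (\<Phi> h) \<le> B" by blast
  have uncurry: "\<psi> h = blinfun_apply (\<Phi> h) (h j)" for h
    using curry[of h "h j"] by simp
  have "linear (\<lambda>v. \<psi> (h(i := v)))" if i: "i < Suc j" for i h
  proof (cases "i = j")
    case True
    then have "(\<lambda>v. \<psi> (h(i := v))) = blinfun_apply (\<Phi> h)" using curry by auto
    then show ?thesis using blinfun.bounded_linear_right bounded_linear.linear by metis
  next
    case False
    with i have ij: "i < j" by simp
    from False have "(\<lambda>v. \<psi> (h(i := v))) = (\<lambda>F. blinfun_apply F (h j)) \<circ> (\<lambda>v. \<Phi> (h(i := v)))"
      using uncurry by auto
    moreover have "linear (\<lambda>F::'a \<Rightarrow>\<^sub>L 'b. blinfun_apply F (h j))"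
      using blinfun.bounded_linear_left bounded_linear.linear by blast
    ultimately show ?thesis using linear_compose[OF lin[OF ij]] by metis
  qed
  moreover have "norm (\<psi> h) \<le> B" if h: "h \<in> unit_dirs (Suc j)" for h
  proof -
    have hj: "h \<in> unit_dirs j" "norm (h j) \<le> 1" using h by (auto simp: unit_dirs_def)
    have "norm (\<psi> h) \<le> norm (\<Phi> h) * norm (h j)" by (simp add: uncurry norm_blinfun)
    also have "\<dots> \<le> norm (\<Phi> h)" using hj(2) by (simp add: mult_left_le)
    finally show ?thesis using B[OF hj(1)] by linarith
  qed
  ultimately show ?thesis unfolding multilin_bounded_def by blast
qed

lemma shift_dir_upd: "shift_dir v (h(j := w)) = (shift_dir v h)(Suc j := w)"
  by (auto simp: shift_dir_def split: nat.split)

lemma shift_dir_eq_upd_0: "shift_dir v h = (shift_dir u h)(0 := v)"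
  by (auto simp: shift_dir_def split: nat.split)

lemma shift_dir_in_unit_dirs: "h \<in> unit_dirs j \<Longrightarrow> norm v \<le> 1 \<Longrightarrow> shift_dir v h \<in> unit_dirs (Suc j)"
  by (auto simp: unit_dirs_def shift_dir_def less_Suc_eq_0_disj)

lemma bounded_linear_shift_dir:
  fixes g :: "(nat \<Rightarrow> 'a::real_normed_vector) \<Rightarrow> 'b::real_normed_vector"
  assumes g: "multilin_bounded (Suc j) g" and h: "h \<in> unit_dirs j"
  shows "bounded_linear (\<lambda>v. g (shift_dir v h))"
proof -
  obtain B where B: "\<forall>h\<in>unit_dirs (Suc j). norm (g h) \<le> B"
    using g unfolding multilin_bounded_def by blast
  have "linear (\<lambda>v. g ((shift_dir 0 h)(0 := v)))"
    using g unfolding multilin_bounded_def by blast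
  then have "linear (\<lambda>v. g (shift_dir v h))" by (simp add: shift_dir_eq_upd_0[symmetric])
  then show ?thesis
    by (rule bounded_linear_of_unit_ball_bound) (use B shift_dir_in_unit_dirs[OF h] in blast)
qed

lemma bounded_bilinear_shift_dir_upd:
  fixes g :: "(nat \<Rightarrow> 'a::real_normed_vector) \<Rightarrow> 'b::real_normed_vector"
  assumes g: "multilin_bounded (Suc (Suc j)) g" and h: "h \<in> unit_dirs j"
  shows "bounded_bilinear (\<lambda>v w. g (shift_dir v (h(j := w))))"
proof -
  obtain B where B: "\<forall>h\<in>unit_dirs (Suc (Suc j)). norm (g h) \<le> B"
    using g unfolding multilin_bounded_def by blast
  show ?thesis
  proof (rule bounded_bilinear_of_unit_ball_bound[where B=B])
    have "linear (\<lambda>w. g ((shift_dir v h)(Suc j := w)))" for v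
      using g unfolding multilin_bounded_def by blast
    then show "linear (\<lambda>w. g (shift_dir v (h(j := w))))" for v by (simp add: shift_dir_upd)
    have "linear (\<lambda>v. g ((shift_dir 0 (h(j := w)))(0 := v)))" for w
      using g unfolding multilin_bounded_def by blast
    then show "linear (\<lambda>v. g (shift_dir v (h(j := w))))" for w by (simp add: shift_dir_eq_upd_0[symmetric])
    show "norm (g (shift_dir v (h(j := w)))) \<le> B" if "norm v \<le> 1" "norm w \<le> 1" for v w
      using B shift_dir_in_unit_dirs[OF unit_dirs_upd[OF h]] that by blast
  qed
qed

abbreviation taylor_remainder ::
    "nat \<Rightarrow> ('a::real_normed_vector \<Rightarrow> 'b::real_normed_vector) \<Rightarrow> 'a \<Rightarrow> 'a \<Rightarrow> real" where
  "taylor_remainder j \<gamma> x v \<equiv>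
     mnorm j (\<lambda>h. hderiv j \<gamma> (x + v) h - hderiv j \<gamma> x h - hderiv (Suc j) \<gamma> x (shift_dir v h))"

abbreviation hderiv_dist ::
    "nat \<Rightarrow> ('a::real_normed_vector \<Rightarrow> 'b::real_normed_vector) \<Rightarrow> 'a \<Rightarrow> ('a \<Rightarrow> 'b) \<Rightarrow> 'a \<Rightarrow> real" where
  "hderiv_dist j \<gamma> x \<eta> y \<equiv> mnorm j (\<lambda>h. hderiv j \<gamma> x h - hderiv j \<eta> y h)"

lemma taylor_remainder_terms_bounded:
  assumes "multilin_bounded n (hderiv n \<phi> y)" "multilin_bounded n (hderiv n \<phi> x)"
    "multilin_bounded (Suc n) (hderiv (Suc n) \<phi> x)"
  shows "\<exists>C. \<forall>h\<in>unit_dirs n.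
    norm (hderiv n \<phi> y h - hderiv n \<phi> x h - hderiv (Suc n) \<phi> x (shift_dir v h)) \<le> C"
proof -
  obtain C1 where C1: "\<forall>h\<in>unit_dirs n. norm (hderiv n \<phi> y h - hderiv n \<phi> x h) \<le> C1"
    using multilin_bounded_diff_bounded[OF assms(1,2)] by blast
  obtain C2 where C2: "\<forall>h. (\<forall>i<Suc n. norm (h i) \<le> max 1 (norm v)) \<longrightarrow> norm (hderiv (Suc n) \<phi> x h) \<le> C2"
    using multilin_bounded_bounded_on_ball[OF assms(3)] by blast
  have "norm (hderiv n \<phi> y h - hderiv n \<phi> x h - hderiv (Suc n) \<phi> x (shift_dir v h)) \<le> C1 + C2"
    if h: "h \<in> unit_dirs n" for h
  proof -
    have "\<forall>i<Suc n. norm (shift_dir v h i) \<le> max 1 (norm v)"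
      using h by (auto simp: shift_dir_def unit_dirs_def split: nat.split)
    then have "norm (hderiv (Suc n) \<phi> x (shift_dir v h)) \<le> C2" using C2 by blast
    moreover have "norm (hderiv n \<phi> y h - hderiv n \<phi> x h) \<le> C1" using C1 h by blast
    ultimately show ?thesis
      using norm_triangle_ineq4[of "hderiv n \<phi> y h - hderiv n \<phi> x h"
          "hderiv (Suc n) \<phi> x (shift_dir v h)"] by linarith
  qed
  then show ?thesis by blast
qed

lemma eventually_add_in_open:
  fixes x :: "'a::real_normed_vector"
  assumes "open U" "x \<in> U"
  shows "eventually (\<lambda>v. x + v \<in> U) (at 0)"
proof -
  have "((\<lambda>v. x + v) \<longlongrightarrow> x + 0) (at (0::'a))"
    by (intro tendsto_intros)
  then show ?thesis using topological_tendstoD[of "\<lambda>v. x + v" x "at 0" U] assms by simp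
qed

section \<open>Derivatives of D\<gamma> as curried derivatives of \<gamma>\<close>

(* The innermost derivative of hderiv takes the last direction, so the direction fed to
   D\<gamma> lands in slot j of D^(j+1)\<gamma>. *)
definition hderiv_Dfun_curried ::
    "nat \<Rightarrow> ('a::real_normed_vector \<Rightarrow> 'b::real_normed_vector) \<Rightarrow> 'a \<Rightarrow> bool" where
  "hderiv_Dfun_curried j \<gamma> x \<longleftrightarrow>
     (\<forall>h v. blinfun_apply (hderiv j (Dfun \<gamma>) x h) v = hderiv (Suc j) \<gamma> x (h(j := v)))"

declare hderiv.simps(2)[simp del]

lemma hderiv_Dfun_curried_0:
  fixes \<gamma> :: "'a::real_normed_vector \<Rightarrow> 'b::real_normed_vector"
  assumes "multilin_bounded 1 (hderiv 1 \<gamma> x)"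
  shows "hderiv_Dfun_curried 0 \<gamma> x"
proof -
  let ?f = "frechet_derivative \<gamma> (at x)"
  have hderiv_1: "hderiv 1 \<gamma> x h = ?f (h 0)" for h
    by (simp add: hderiv.simps(2))
  obtain B where B: "\<forall>h\<in>unit_dirs 1. norm (hderiv 1 \<gamma> x h) \<le> B"
    using assms unfolding multilin_bounded_def by auto
  have "linear ?f" using assms unfolding multilin_bounded_def hderiv_1 by auto
  moreover have "norm (?f v) \<le> B" if "norm v \<le> 1" for v
    using B[rule_format, of "\<lambda>i. v"] that by (auto simp: unit_dirs_def hderiv.simps(2))
  ultimately have "bounded_linear ?f" by (rule bounded_linear_of_unit_ball_bound)
  then show ?thesis
    unfolding hderiv_Dfun_curried_def Dfun_def by (simp add: bounded_linear_Blinfun_apply hderiv.simps(2))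
qed

lemma hderiv_Dfun_curried_Suc:
  fixes \<gamma> :: "'a::real_normed_vector \<Rightarrow> 'b::real_normed_vector"
  assumes U: "open U" "x \<in> U" and curried: "\<And>y. y \<in> U \<Longrightarrow> hderiv_Dfun_curried j \<gamma> y"
    and diff: "\<And>h. (\<lambda>y. hderiv j (Dfun \<gamma>) y h) differentiable (at x)"
  shows "hderiv_Dfun_curried (Suc j) \<gamma> x"
  unfolding hderiv_Dfun_curried_def
proof (intro allI)
  fix h v
  define G where "G = (\<lambda>y. hderiv j (Dfun \<gamma>) y (\<lambda>i. h (Suc i)))"
  define G' where "G' = frechet_derivative G (at x)"
  define F where "F = (\<lambda>y. hderiv (Suc j) \<gamma> y (\<lambda>i. (h(Suc j := v)) (Suc i)))"
  have "(G has_derivative G') (at x)"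
    unfolding G'_def G_def using diff frechet_derivative_works by blast
  then have "((\<lambda>y. blinfun_apply (G y) v) has_derivative (\<lambda>w. blinfun_apply (G' w) v)) (at x)"
    by (rule bounded_linear.has_derivative[OF blinfun.bounded_linear_left])
  moreover have "blinfun_apply (G y) v = F y" if "y \<in> U" for y
  proof -
    have "(\<lambda>i. h (Suc i))(j := v) = (\<lambda>i. (h(Suc j := v)) (Suc i))" by auto
    then show ?thesis using curried[OF that] unfolding hderiv_Dfun_curried_def G_def F_def by simp
  qed
  ultimately have "(F has_derivative (\<lambda>w. blinfun_apply (G' w) v)) (at x)"
    by (rule has_derivative_transform_within_open[OF _ U])
  then have "frechet_derivative F (at x) (h 0) = blinfun_apply (G' (h 0)) v"
    using frechet_derivative_at by metis
  then show "blinfun_apply (hderiv (Suc j) (Dfun \<gamma>) x h) v = hderiv (Suc (Suc j)) \<gamma> x (h(Suc j := v))"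
    by (simp add: hderiv.simps(2) F_def G'_def G_def)
qed

lemma multilin_bounded_hderiv_Suc_iff:
  fixes \<gamma> :: "'a::real_normed_vector \<Rightarrow> 'b::real_normed_vector"
  assumes "hderiv_Dfun_curried j \<gamma> y"
  shows "multilin_bounded (Suc j) (hderiv (Suc j) \<gamma> y) \<longleftrightarrow> multilin_bounded j (hderiv j (Dfun \<gamma>) y)"
  using multilin_bounded_curry multilin_bounded_uncurry assms
  unfolding hderiv_Dfun_curried_def by metis

lemma differentiable_hderiv_of_unit_dirs:
  fixes \<phi> :: "'a::real_normed_vector \<Rightarrow> 'c::real_normed_vector"
  assumes U: "open U" "x \<in> U"
    and lin: "\<And>y i h. y \<in> U \<Longrightarrow> i < j \<Longrightarrow> linear (\<lambda>v. hderiv j \<phi> y (h(i := v)))"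
    and diff: "\<And>h. h \<in> unit_dirs j \<Longrightarrow> (\<lambda>y. hderiv j \<phi> y h) differentiable (at x)"
  shows "(\<lambda>y. hderiv j \<phi> y h) differentiable (at x)"
proof -
  define c where "c = (\<Prod>i<j. dir_scale h i)"
  obtain D where "((\<lambda>y. hderiv j \<phi> y (normalize_dirs j h)) has_derivative D) (at x)"
    using diff[OF normalize_dirs_in_unit_dirs] unfolding differentiable_def by blast
  then have "((\<lambda>y. c *\<^sub>R hderiv j \<phi> y (normalize_dirs j h)) has_derivative (\<lambda>v. c *\<^sub>R D v)) (at x)"
    by (rule has_derivative_scaleR_right)
  moreover have "c *\<^sub>R hderiv j \<phi> y (normalize_dirs j h) = hderiv j \<phi> y h" if "y \<in> U" for y
    unfolding c_def by (rule multilinear_eq_scale_normalize_dirs[symmetric]) (rule lin[OF that])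
  ultimately have "((\<lambda>y. hderiv j \<phi> y h) has_derivative (\<lambda>v. c *\<^sub>R D v)) (at x)"
    by (rule has_derivative_transform_within_open[OF _ U])
  then show ?thesis by (rule differentiableI)
qed

lemma differentiable_hderiv_of_taylor_remainder:
  fixes \<phi> :: "'a::real_normed_vector \<Rightarrow> 'c::real_normed_vector"
  assumes U: "open U" "x \<in> U"
    and ml: "\<And>y. y \<in> U \<Longrightarrow> multilin_bounded j (hderiv j \<phi> y)"
    and ml_Suc: "multilin_bounded (Suc j) (hderiv (Suc j) \<phi> x)"
    and remainder: "((\<lambda>v. taylor_remainder j \<phi> x v / norm v) \<longlongrightarrow> 0) (at 0)"
  shows "(\<lambda>y. hderiv j \<phi> y h) differentiable (at x)"
proof (rule differentiable_hderiv_of_unit_dirs[OF U])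
  show "\<And>y i h. y \<in> U \<Longrightarrow> i < j \<Longrightarrow> linear (\<lambda>v. hderiv j \<phi> y (h(i := v)))"
    using ml unfolding multilin_bounded_def by blast
  fix h :: "nat \<Rightarrow> 'a" assume h: "h \<in> unit_dirs j"
  define L where "L = (\<lambda>v. hderiv (Suc j) \<phi> x (shift_dir v h))"
  have L: "bounded_linear L"
    unfolding L_def by (rule bounded_linear_shift_dir[OF ml_Suc h])
  have "((\<lambda>v. norm (hderiv j \<phi> (x + v) h - hderiv j \<phi> x h - L v) / norm v) \<longlongrightarrow> 0) (at 0)"
  proof (rule tendsto_sandwich[where f="\<lambda>v. 0" and h="\<lambda>v. taylor_remainder j \<phi> x v / norm v"])
    show "\<forall>\<^sub>F v in at 0. norm (hderiv j \<phi> (x + v) h - hderiv j \<phi> x h - L v) / norm v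
        \<le> taylor_remainder j \<phi> x v / norm v"
      using eventually_add_in_open[OF U]
    proof (rule eventually_mono)
      fix v assume xv: "x + v \<in> U"
      obtain C where C: "\<forall>h\<in>unit_dirs j. norm (hderiv j \<phi> (x + v) h - hderiv j \<phi> x h
          - hderiv (Suc j) \<phi> x (shift_dir v h)) \<le> C"
        using taylor_remainder_terms_bounded[OF ml[OF xv] ml[OF U(2)] ml_Suc] by blast
      have "norm (hderiv j \<phi> (x + v) h - hderiv j \<phi> x h - L v) \<le> taylor_remainder j \<phi> x v"
        unfolding L_def by (rule mnorm_ge[where B=C]) (use C h in auto)
      then show "norm (hderiv j \<phi> (x + v) h - hderiv j \<phi> x h - L v) / norm v
          \<le> taylor_remainder j \<phi> x v / norm v"
        by (simp add: divide_right_mono)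
    qed
  qed (use remainder in auto)
  with L have "((\<lambda>y. hderiv j \<phi> y h) has_derivative L) (at x)"
    by (simp add: has_derivative_at)
  then show "(\<lambda>y. hderiv j \<phi> y h) differentiable (at x)" by (rule differentiableI)
qed

lemma has_derivative_blinfun_of_uniform_remainder:
  fixes F :: "'a::real_normed_vector \<Rightarrow> ('c::real_normed_vector \<Rightarrow>\<^sub>L 'b::real_normed_vector)"
  assumes D: "bounded_bilinear D"
    and remainder: "\<forall>\<^sub>F v in at 0. \<forall>w. norm w \<le> 1 \<longrightarrow>
      norm (blinfun_apply (F (x + v)) w - blinfun_apply (F x) w - D v w) \<le> R v"
    and R: "((\<lambda>v. R v / norm v) \<longlongrightarrow> 0) (at 0)"
  shows "(F has_derivative bounded_bilinear.prod_right D) (at x)"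
proof -
  interpret D: bounded_bilinear D by (rule D)
  have "((\<lambda>v. norm (F (x + v) - F x - D.prod_right v) / norm v) \<longlongrightarrow> 0) (at 0)"
  proof (rule tendsto_sandwich[where f="\<lambda>v. 0" and h="\<lambda>v. R v / norm v"])
    show "\<forall>\<^sub>F v in at 0. norm (F (x + v) - F x - D.prod_right v) / norm v \<le> R v / norm v"
      using remainder
    proof (rule eventually_mono)
      fix v
      assume r: "\<forall>w. norm w \<le> 1 \<longrightarrow>
        norm (blinfun_apply (F (x + v)) w - blinfun_apply (F x) w - D v w) \<le> R v"
      then have "0 \<le> R v" using r[rule_format, of 0] by (simp add: D.zero_right)
      then have "norm (F (x + v) - F x - D.prod_right v) \<le> R v"
      proof (rule norm_blinfun_bound)
        fix w
        show "norm (blinfun_apply (F (x + v) - F x - D.prod_right v) w) \<le> R v * norm w"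
        proof (rule linear_norm_le_of_unit_ball_bound)
          show "linear (blinfun_apply (F (x + v) - F x - D.prod_right v))"
            by (rule bounded_linear.linear[OF blinfun.bounded_linear_right])
        qed (use r in \<open>simp add: blinfun.diff_left\<close>)
      qed
      then show "norm (F (x + v) - F x - D.prod_right v) / norm v \<le> R v / norm v"
        by (simp add: divide_right_mono)
    qed
  qed (use R in auto)
  then show ?thesis using D.bounded_linear_prod_right by (simp add: has_derivative_at)
qed

lemma differentiable_hderiv_Dfun_of_taylor_remainder:
  fixes \<gamma> :: "'a::real_normed_vector \<Rightarrow> 'b::real_normed_vector"
  assumes U: "open U" "x \<in> U" and curried: "\<And>y. y \<in> U \<Longrightarrow> hderiv_Dfun_curried j \<gamma> y"
    and ml: "\<And>y. y \<in> U \<Longrightarrow> multilin_bounded (Suc j) (hderiv (Suc j) \<gamma> y)"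
    and ml_Suc: "multilin_bounded (Suc (Suc j)) (hderiv (Suc (Suc j)) \<gamma> x)"
    and remainder: "((\<lambda>v. taylor_remainder (Suc j) \<gamma> x v / norm v) \<longlongrightarrow> 0) (at 0)"
    and h: "h \<in> unit_dirs j"
  shows "(\<lambda>y. hderiv j (Dfun \<gamma>) y h) differentiable (at x)"
proof -
  define D where "D = (\<lambda>v w. hderiv (Suc (Suc j)) \<gamma> x (shift_dir v (h(j := w))))"
  have "bounded_bilinear D"
    unfolding D_def by (rule bounded_bilinear_shift_dir_upd[OF ml_Suc h])
  moreover have "\<forall>\<^sub>F v in at 0. \<forall>w. norm w \<le> 1 \<longrightarrow>
      norm (blinfun_apply (hderiv j (Dfun \<gamma>) (x + v) h) w - blinfun_apply (hderiv j (Dfun \<gamma>) x h) w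
        - D v w) \<le> taylor_remainder (Suc j) \<gamma> x v"
    using eventually_add_in_open[OF U]
  proof (rule eventually_mono)
    fix v assume xv: "x + v \<in> U"
    obtain C where C: "\<forall>h\<in>unit_dirs (Suc j). norm (hderiv (Suc j) \<gamma> (x + v) h - hderiv (Suc j) \<gamma> x h
        - hderiv (Suc (Suc j)) \<gamma> x (shift_dir v h)) \<le> C"
      using taylor_remainder_terms_bounded[OF ml[OF xv] ml[OF U(2)] ml_Suc] by blast
    show "\<forall>w. norm w \<le> 1 \<longrightarrow>
      norm (blinfun_apply (hderiv j (Dfun \<gamma>) (x + v) h) w - blinfun_apply (hderiv j (Dfun \<gamma>) x h) w
        - D v w) \<le> taylor_remainder (Suc j) \<gamma> x v"
      using curried[OF xv] curried[OF U(2)] unfolding hderiv_Dfun_curried_def D_def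
      by (auto intro!: mnorm_ge[where B=C] unit_dirs_upd[OF h] simp: C)
  qed
  ultimately have "((\<lambda>y. hderiv j (Dfun \<gamma>) y h) has_derivative bounded_bilinear.prod_right D) (at x)"
    using remainder by (rule has_derivative_blinfun_of_uniform_remainder)
  then show ?thesis by (rule differentiableI)
qed

lemma FC_multilin_bounded: "FC m U \<gamma> \<Longrightarrow> j \<le> m \<Longrightarrow> x \<in> U \<Longrightarrow> multilin_bounded j (hderiv j \<gamma> x)"
  unfolding FC_def by blast

lemma FC_taylor_remainder:
  "FC m U \<gamma> \<Longrightarrow> j < m \<Longrightarrow> x \<in> U \<Longrightarrow> ((\<lambda>v. taylor_remainder j \<gamma> x v / norm v) \<longlongrightarrow> 0) (at 0)"
  unfolding FC_def by blast

lemma FC_hderiv_dist: "FC m U \<gamma> \<Longrightarrow> j \<le> m \<Longrightarrow> x \<in> U \<Longrightarrow> ((\<lambda>y. hderiv_dist j \<gamma> y \<gamma> x) \<longlongrightarrow> 0) (at x within U)"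
  unfolding FC_def by blast

lemma FC_mono: "FC m U \<gamma> \<Longrightarrow> n \<le> m \<Longrightarrow> FC n U \<gamma>"
  unfolding FC_def by (meson le_trans less_le_trans)

lemma hderiv_Dfun_curried_of_FC_Suc:
  fixes \<gamma> :: "'a::real_normed_vector \<Rightarrow> 'b::real_normed_vector"
  assumes U: "open U" and FC: "FC (Suc k) U \<gamma>" and "j \<le> k" "y \<in> U"
  shows "hderiv_Dfun_curried j \<gamma> y"
  using assms(3,4)
proof (induction j arbitrary: y)
  case 0
  show ?case by (rule hderiv_Dfun_curried_0) (rule FC_multilin_bounded[OF FC _ 0(2)], simp)
next
  case (Suc j)
  have curried: "\<And>y. y \<in> U \<Longrightarrow> hderiv_Dfun_curried j \<gamma> y" using Suc by simp
  show ?case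
  proof (rule hderiv_Dfun_curried_Suc[OF U Suc.prems(2) curried])
    fix h
    show "(\<lambda>y. hderiv j (Dfun \<gamma>) y h) differentiable (at y)"
    proof (rule differentiable_hderiv_of_unit_dirs[OF U Suc.prems(2)])
      fix y' i h' assume y': "y' \<in> U" and i: "i < j"
      have "multilin_bounded j (hderiv j (Dfun \<gamma>) y')"
        using multilin_bounded_hderiv_Suc_iff[OF curried[OF y']]
          FC_multilin_bounded[OF FC _ y', of "Suc j"] Suc.prems by simp
      then show "linear (\<lambda>v. hderiv j (Dfun \<gamma>) y' (h'(i := v)))"
        using i unfolding multilin_bounded_def by blast
    next
      fix h' :: "nat \<Rightarrow> 'a" assume "h' \<in> unit_dirs j"
      then show "(\<lambda>y'. hderiv j (Dfun \<gamma>) y' h') differentiable (at y)"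
        using Suc.prems
        by (intro differentiable_hderiv_Dfun_of_taylor_remainder[OF U Suc.prems(2) curried]
              FC_multilin_bounded[OF FC] FC_taylor_remainder[OF FC]) auto
    qed
  qed
qed

lemma hderiv_Dfun_curried_of_FC_Dfun:
  fixes \<gamma> :: "'a::real_normed_vector \<Rightarrow> 'b::real_normed_vector"
  assumes U: "open U" and FC1: "FC 1 U \<gamma>" and FC: "FC k U (Dfun \<gamma>)" and "j \<le> k" "y \<in> U"
  shows "hderiv_Dfun_curried j \<gamma> y"
  using assms(4,5)
proof (induction j arbitrary: y)
  case 0
  show ?case by (rule hderiv_Dfun_curried_0) (rule FC_multilin_bounded[OF FC1 _ 0(2)], simp)
next
  case (Suc j)
  have curried: "\<And>y. y \<in> U \<Longrightarrow> hderiv_Dfun_curried j \<gamma> y" using Suc by simp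
  show ?case
    using Suc.prems
    by (intro hderiv_Dfun_curried_Suc[OF U Suc.prems(2) curried]
          differentiable_hderiv_of_taylor_remainder[OF U Suc.prems(2)]
          FC_multilin_bounded[OF FC] FC_taylor_remainder[OF FC]) auto
qed

lemma mnorm_hderiv_Dfun:
  fixes \<gamma> :: "'a::real_normed_vector \<Rightarrow> 'b::real_normed_vector"
  assumes "hderiv_Dfun_curried j \<gamma> x" "multilin_bounded (Suc j) (hderiv (Suc j) \<gamma> x)"
  shows "mnorm j (hderiv j (Dfun \<gamma>) x) = mnorm (Suc j) (hderiv (Suc j) \<gamma> x)"
proof -
  obtain C where "\<forall>h\<in>unit_dirs (Suc j). norm (hderiv (Suc j) \<gamma> x h) \<le> C"
    using assms(2) unfolding multilin_bounded_def by blast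
  then show ?thesis
    using assms(1) unfolding hderiv_Dfun_curried_def by (intro mnorm_curry(1)[where B=C]) auto
qed

lemma hderiv_dist_Dfun:
  fixes \<gamma> \<eta> :: "'a::real_normed_vector \<Rightarrow> 'b::real_normed_vector"
  assumes "hderiv_Dfun_curried j \<gamma> x" "hderiv_Dfun_curried j \<eta> y"
    "multilin_bounded (Suc j) (hderiv (Suc j) \<gamma> x)" "multilin_bounded (Suc j) (hderiv (Suc j) \<eta> y)"
  shows "hderiv_dist j (Dfun \<gamma>) x (Dfun \<eta>) y = hderiv_dist (Suc j) \<gamma> x \<eta> y"
proof -
  obtain C where "\<forall>h\<in>unit_dirs (Suc j). norm (hderiv (Suc j) \<gamma> x h - hderiv (Suc j) \<eta> y h) \<le> C"
    using multilin_bounded_diff_bounded[OF assms(3,4)] by blast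
  then show ?thesis
    using assms(1,2) unfolding hderiv_Dfun_curried_def
    by (intro mnorm_curry(1)[where B=C]) (auto simp: blinfun.diff_left)
qed

lemma taylor_remainder_Dfun:
  fixes \<gamma> :: "'a::real_normed_vector \<Rightarrow> 'b::real_normed_vector"
  assumes curried: "hderiv_Dfun_curried j \<gamma> (x + v)" "hderiv_Dfun_curried j \<gamma> x"
      "hderiv_Dfun_curried (Suc j) \<gamma> x"
    and ml: "multilin_bounded (Suc j) (hderiv (Suc j) \<gamma> (x + v))"
      "multilin_bounded (Suc j) (hderiv (Suc j) \<gamma> x)"
      "multilin_bounded (Suc (Suc j)) (hderiv (Suc (Suc j)) \<gamma> x)"
  shows "taylor_remainder j (Dfun \<gamma>) x v = taylor_remainder (Suc j) \<gamma> x v"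
proof -
  obtain C where "\<forall>h\<in>unit_dirs (Suc j). norm (hderiv (Suc j) \<gamma> (x + v) h - hderiv (Suc j) \<gamma> x h
      - hderiv (Suc (Suc j)) \<gamma> x (shift_dir v h)) \<le> C"
    using taylor_remainder_terms_bounded[OF ml] by blast
  then show ?thesis
    using curried unfolding hderiv_Dfun_curried_def
    by (intro mnorm_curry(1)[where B=C]) (auto simp: blinfun.diff_left shift_dir_upd)
qed

lemma taylor_remainder_Dfun_tendsto_iff:
  fixes \<gamma> :: "'a::real_normed_vector \<Rightarrow> 'b::real_normed_vector"
  assumes U: "open U" "x \<in> U" and curried: "\<And>y. y \<in> U \<Longrightarrow> hderiv_Dfun_curried j \<gamma> y"
    and curried_Suc: "hderiv_Dfun_curried (Suc j) \<gamma> x"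
    and ml: "\<And>y. y \<in> U \<Longrightarrow> multilin_bounded (Suc j) (hderiv (Suc j) \<gamma> y)"
    and ml_Suc: "multilin_bounded (Suc (Suc j)) (hderiv (Suc (Suc j)) \<gamma> x)"
  shows "((\<lambda>v. taylor_remainder j (Dfun \<gamma>) x v / norm v) \<longlongrightarrow> 0) (at 0)
     \<longleftrightarrow> ((\<lambda>v. taylor_remainder (Suc j) \<gamma> x v / norm v) \<longlongrightarrow> 0) (at 0)"
  by (rule tendsto_cong, rule eventually_mono[OF eventually_add_in_open[OF U]])
     (simp add: taylor_remainder_Dfun curried curried_Suc ml ml_Suc U)

lemma hderiv_dist_Dfun_tendsto_iff:
  fixes \<gamma> :: "'a::real_normed_vector \<Rightarrow> 'b::real_normed_vector"
  assumes x: "x \<in> U" and curried: "\<And>y. y \<in> U \<Longrightarrow> hderiv_Dfun_curried j \<gamma> y"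
    and ml: "\<And>y. y \<in> U \<Longrightarrow> multilin_bounded (Suc j) (hderiv (Suc j) \<gamma> y)"
  shows "((\<lambda>y. hderiv_dist j (Dfun \<gamma>) y (Dfun \<gamma>) x) \<longlongrightarrow> 0) (at x within U)
     \<longleftrightarrow> ((\<lambda>y. hderiv_dist (Suc j) \<gamma> y \<gamma> x) \<longlongrightarrow> 0) (at x within U)"
proof (rule tendsto_cong)
  have "eventually (\<lambda>y. y \<in> U) (at x within U)" by (simp add: eventually_at_filter)
  then show "\<forall>\<^sub>F y in at x within U. hderiv_dist j (Dfun \<gamma>) y (Dfun \<gamma>) x = hderiv_dist (Suc j) \<gamma> y \<gamma> x"
    by (rule eventually_mono) (simp add: hderiv_dist_Dfun curried ml x)
qed

lemma multilin_bounded_upto_Suc_iff_Dfun: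
  fixes \<gamma> :: "'a::real_normed_vector \<Rightarrow> 'b::real_normed_vector"
  assumes FC1: "FC 1 U \<gamma>"
    and curried: "\<forall>j\<le>k. \<forall>y\<in>U. hderiv_Dfun_curried j \<gamma> y"
  shows "(\<forall>j\<le>Suc k. \<forall>x\<in>U. multilin_bounded j (hderiv j \<gamma> x))
    \<longleftrightarrow> (\<forall>j\<le>k. \<forall>x\<in>U. multilin_bounded j (hderiv j (Dfun \<gamma>) x))"
proof (rule all_le_Suc_shift_iff)
  show "\<forall>x\<in>U. multilin_bounded 0 (hderiv 0 \<gamma> x)"
    by (intro ballI FC_multilin_bounded[OF FC1]) simp_all
  show "(\<forall>x\<in>U. multilin_bounded (Suc j) (hderiv (Suc j) \<gamma> x))
      \<longleftrightarrow> (\<forall>x\<in>U. multilin_bounded j (hderiv j (Dfun \<gamma>) x))" if "j \<le> k" for j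
    by (rule ball_cong[OF refl], rule multilin_bounded_hderiv_Suc_iff) (use curried that in blast)
qed

lemma taylor_remainders_upto_Suc_iff_Dfun:
  fixes \<gamma> :: "'a::real_normed_vector \<Rightarrow> 'b::real_normed_vector"
  assumes U: "open U" and FC1: "FC 1 U \<gamma>"
    and curried: "\<forall>j\<le>k. \<forall>y\<in>U. hderiv_Dfun_curried j \<gamma> y"
    and ml: "\<forall>j\<le>Suc k. \<forall>x\<in>U. multilin_bounded j (hderiv j \<gamma> x)"
  shows "(\<forall>j<Suc k. \<forall>x\<in>U. ((\<lambda>v. taylor_remainder j \<gamma> x v / norm v) \<longlongrightarrow> 0) (at 0))
    \<longleftrightarrow> (\<forall>j<k. \<forall>x\<in>U. ((\<lambda>v. taylor_remainder j (Dfun \<gamma>) x v / norm v) \<longlongrightarrow> 0) (at 0))"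
proof (rule all_less_Suc_shift_iff)
  show "\<forall>x\<in>U. ((\<lambda>v. taylor_remainder 0 \<gamma> x v / norm v) \<longlongrightarrow> 0) (at 0)"
    by (intro ballI FC_taylor_remainder[OF FC1]) simp_all
  show "(\<forall>x\<in>U. ((\<lambda>v. taylor_remainder (Suc j) \<gamma> x v / norm v) \<longlongrightarrow> 0) (at 0))
      \<longleftrightarrow> (\<forall>x\<in>U. ((\<lambda>v. taylor_remainder j (Dfun \<gamma>) x v / norm v) \<longlongrightarrow> 0) (at 0))"
    if j: "j < k" for j
  proof (rule ball_cong[OF refl])
    fix x assume x: "x \<in> U"
    show "((\<lambda>v. taylor_remainder (Suc j) \<gamma> x v / norm v) \<longlongrightarrow> 0) (at 0)
        \<longleftrightarrow> ((\<lambda>v. taylor_remainder j (Dfun \<gamma>) x v / norm v) \<longlongrightarrow> 0) (at 0)"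
      by (rule taylor_remainder_Dfun_tendsto_iff[symmetric, OF U x]) (use j x ml curried in auto)
  qed
qed

lemma hderiv_dists_upto_Suc_iff_Dfun:
  fixes \<gamma> :: "'a::real_normed_vector \<Rightarrow> 'b::real_normed_vector"
  assumes FC1: "FC 1 U \<gamma>"
    and curried: "\<forall>j\<le>k. \<forall>y\<in>U. hderiv_Dfun_curried j \<gamma> y"
    and ml: "\<forall>j\<le>Suc k. \<forall>x\<in>U. multilin_bounded j (hderiv j \<gamma> x)"
  shows "(\<forall>j\<le>Suc k. \<forall>x\<in>U. ((\<lambda>y. hderiv_dist j \<gamma> y \<gamma> x) \<longlongrightarrow> 0) (at x within U))
    \<longleftrightarrow> (\<forall>j\<le>k. \<forall>x\<in>U. ((\<lambda>y. hderiv_dist j (Dfun \<gamma>) y (Dfun \<gamma>) x) \<longlongrightarrow> 0) (at x within U))"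
proof (rule all_le_Suc_shift_iff)
  show "\<forall>x\<in>U. ((\<lambda>y. hderiv_dist 0 \<gamma> y \<gamma> x) \<longlongrightarrow> 0) (at x within U)"
    using FC_hderiv_dist[OF FC1, of 0] by simp
  show "(\<forall>x\<in>U. ((\<lambda>y. hderiv_dist (Suc j) \<gamma> y \<gamma> x) \<longlongrightarrow> 0) (at x within U))
      \<longleftrightarrow> (\<forall>x\<in>U. ((\<lambda>y. hderiv_dist j (Dfun \<gamma>) y (Dfun \<gamma>) x) \<longlongrightarrow> 0) (at x within U))"
    if j: "j \<le> k" for j
  proof (rule ball_cong[OF refl])
    fix x assume x: "x \<in> U"
    show "((\<lambda>y. hderiv_dist (Suc j) \<gamma> y \<gamma> x) \<longlongrightarrow> 0) (at x within U)
        \<longleftrightarrow> ((\<lambda>y. hderiv_dist j (Dfun \<gamma>) y (Dfun \<gamma>) x) \<longlongrightarrow> 0) (at x within U)"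
      by (rule hderiv_dist_Dfun_tendsto_iff[symmetric, OF x]) (use j x ml curried in auto)
  qed
qed

lemma FC_Suc_iff_FC_Dfun:
  fixes \<gamma> :: "'a::real_normed_vector \<Rightarrow> 'b::real_normed_vector"
  assumes U: "open U" and FC1: "FC 1 U \<gamma>"
    and curried: "\<And>j y. j \<le> k \<Longrightarrow> y \<in> U \<Longrightarrow> hderiv_Dfun_curried j \<gamma> y"
  shows "FC (Suc k) U \<gamma> \<longleftrightarrow> FC k U (Dfun \<gamma>)"
proof -
  have curried_all: "\<forall>j\<le>k. \<forall>y\<in>U. hderiv_Dfun_curried j \<gamma> y" using curried by blast
  note ml_iff = multilin_bounded_upto_Suc_iff_Dfun[OF FC1 curried_all]
  note remainder_iff = taylor_remainders_upto_Suc_iff_Dfun[OF U FC1 curried_all]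
  note dist_iff = hderiv_dists_upto_Suc_iff_Dfun[OF FC1 curried_all]
  show ?thesis
  proof
    assume FC: "FC (Suc k) U \<gamma>"
    then have ml: "\<forall>j\<le>Suc k. \<forall>x\<in>U. multilin_bounded j (hderiv j \<gamma> x)"
      unfolding FC_def by (rule conjunct1)
    from FC show "FC k U (Dfun \<gamma>)"
      unfolding FC_def ml_iff[symmetric] remainder_iff[OF ml, symmetric] dist_iff[OF ml, symmetric] .
  next
    assume FC: "FC k U (Dfun \<gamma>)"
    then have ml: "\<forall>j\<le>Suc k. \<forall>x\<in>U. multilin_bounded j (hderiv j \<gamma> x)"
      unfolding FC_def ml_iff by (rule conjunct1)
    from FC show "FC (Suc k) U \<gamma>"
      unfolding FC_def ml_iff remainder_iff[OF ml] dist_iff[OF ml] .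
  qed
qed

section \<open>The weighted spaces\<close>

abbreviation weighted_sup ::
    "'a set \<Rightarrow> ('a \<Rightarrow> ereal) \<Rightarrow> nat \<Rightarrow> ('a::real_normed_vector \<Rightarrow> 'b::real_normed_vector) \<Rightarrow> ereal" where
  "weighted_sup U f j \<gamma> \<equiv> (SUP x\<in>U. \<bar>f x\<bar> * ereal (mnorm j (hderiv j \<gamma> x)))"

lemma weighted_sup_hderiv_Suc_eq_Dfun:
  fixes \<gamma> :: "'a::real_normed_vector \<Rightarrow> 'b::real_normed_vector"
  assumes "\<And>y. y \<in> U \<Longrightarrow> hderiv_Dfun_curried j \<gamma> y"
    "\<And>y. y \<in> U \<Longrightarrow> multilin_bounded (Suc j) (hderiv (Suc j) \<gamma> y)"
  shows "weighted_sup U f (Suc j) \<gamma> = weighted_sup U f j (Dfun \<gamma>)"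
  by (rule SUP_cong) (simp_all add: mnorm_hderiv_Dfun assms)

lemma CW_Suc_iff:
  fixes \<gamma> :: "'a::real_normed_vector \<Rightarrow> 'b::real_normed_vector"
  assumes U: "open U" and FC1: "FC 1 U \<gamma>"
  shows "\<gamma> \<in> CW (Suc k) U W \<longleftrightarrow> Dfun \<gamma> \<in> CW k U W \<and> \<gamma> \<in> CW 0 U W"
proof (cases "FC (Suc k) U \<gamma>")
  case True
  have curried: "\<And>j y. j \<le> k \<Longrightarrow> y \<in> U \<Longrightarrow> hderiv_Dfun_curried j \<gamma> y"
    by (rule hderiv_Dfun_curried_of_FC_Suc[OF U True])
  have "weighted_sup U f (Suc j) \<gamma> = weighted_sup U f j (Dfun \<gamma>)" if "j \<le> k" for f j
    using that by (intro weighted_sup_hderiv_Suc_eq_Dfun curried FC_multilin_bounded[OF True]) auto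
  moreover have "FC k U (Dfun \<gamma>)" using FC_Suc_iff_FC_Dfun[OF U FC1 curried] True by simp
  moreover have "FC 0 U \<gamma>" using FC_mono[OF True] by simp
  ultimately show ?thesis
    using True unfolding CW_def by (auto simp: all_le_Suc_conv)
next
  case False
  have "\<not> FC k U (Dfun \<gamma>)"
  proof
    assume FC_D: "FC k U (Dfun \<gamma>)"
    then have "\<And>j y. j \<le> k \<Longrightarrow> y \<in> U \<Longrightarrow> hderiv_Dfun_curried j \<gamma> y"
      by (rule hderiv_Dfun_curried_of_FC_Dfun[OF U FC1])
    then show False using FC_Suc_iff_FC_Dfun[OF U FC1] FC_D False by simp
  qed
  then show ?thesis using False unfolding CW_def by blast
qed

lemma CW_SucD:
  fixes \<eta> :: "'a::real_normed_vector \<Rightarrow> 'b::real_normed_vector"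
  assumes U: "open U" and \<eta>: "\<eta> \<in> CW (Suc k) U W"
  shows "Dfun \<eta> \<in> CW k U W" "\<eta> \<in> CW 0 U W"
proof -
  have "FC 1 U \<eta>" using \<eta> FC_mono[of "Suc k" U \<eta> 1] unfolding CW_def by auto
  then show "Dfun \<eta> \<in> CW k U W" "\<eta> \<in> CW 0 U W" using CW_Suc_iff[OF U] \<eta> by blast+
qed

lemma CW_multilin_bounded: "\<gamma> \<in> CW m U W \<Longrightarrow> j \<le> m \<Longrightarrow> x \<in> U \<Longrightarrow> multilin_bounded j (hderiv j \<gamma> x)"
  unfolding CW_def using FC_multilin_bounded by blast

lemma wsemi_Suc_eq_wsemi_Dfun:
  fixes \<eta> \<zeta> :: "'a::real_normed_vector \<Rightarrow> 'b::real_normed_vector"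
  assumes U: "open U" and \<eta>: "\<eta> \<in> CW (Suc k) U W" and \<zeta>: "\<zeta> \<in> CW (Suc k) U W" and j: "j \<le> k"
  shows "wsemi U f (Suc j) \<eta> \<zeta> = wsemi U f j (Dfun \<eta>) (Dfun \<zeta>)"
proof -
  have FC: "FC (Suc k) U \<eta>" "FC (Suc k) U \<zeta>" using \<eta> \<zeta> by (auto simp: CW_def)
  have "hderiv_dist j (Dfun \<eta>) x (Dfun \<zeta>) x = hderiv_dist (Suc j) \<eta> x \<zeta> x" if x: "x \<in> U" for x
    using j x
    by (intro hderiv_dist_Dfun hderiv_Dfun_curried_of_FC_Suc[OF U FC(1)]
          hderiv_Dfun_curried_of_FC_Suc[OF U FC(2)] FC_multilin_bounded[OF FC(1)]
          FC_multilin_bounded[OF FC(2)]) auto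
  then show ?thesis unfolding wsemi_def by (intro SUP_cong) auto
qed

lemma wsemi_self:
  assumes "U \<noteq> {}"
  shows "wsemi U f j \<eta> \<eta> = 0"
proof -
  have "hderiv_dist j \<eta> x \<eta> x = 0" for x
  proof -
    have "unit_dirs j \<noteq> ({} :: (nat \<Rightarrow> 'a) set)" using unit_dirs_zero by blast
    then show ?thesis unfolding mnorm_def by simp
  qed
  then show ?thesis using assms by (simp add: wsemi_def zero_ereal_def[symmetric])
qed

lemma wsemi_nonneg:
  assumes "U \<noteq> {}" and "\<And>x. x \<in> U \<Longrightarrow> multilin_bounded j (hderiv j \<eta> x)"
    "\<And>x. x \<in> U \<Longrightarrow> multilin_bounded j (hderiv j \<zeta> x)"
  shows "0 \<le> wsemi U f j \<eta> \<zeta>"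
proof -
  obtain x where x: "x \<in> U" using assms(1) by blast
  obtain C where "\<forall>h\<in>unit_dirs j. norm (hderiv j \<eta> x h - hderiv j \<zeta> x h) \<le> C"
    using multilin_bounded_diff_bounded[OF assms(2,3)[OF x]] by blast
  then have "0 \<le> hderiv_dist j \<eta> x \<zeta> x" by (intro mnorm_nonneg[where B=C]) blast
  then have "0 \<le> \<bar>f x\<bar> * ereal (hderiv_dist j \<eta> x \<zeta> x)" by simp
  also have "\<dots> \<le> wsemi U f j \<eta> \<zeta>" unfolding wsemi_def by (rule SUP_upper[OF x])
  finally show ?thesis .
qed

lemma wsemi_triangle:
  assumes "\<And>x. x \<in> U \<Longrightarrow> multilin_bounded j (hderiv j \<eta> x)"
    "\<And>x. x \<in> U \<Longrightarrow> multilin_bounded j (hderiv j \<zeta> x)"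
    "\<And>x. x \<in> U \<Longrightarrow> multilin_bounded j (hderiv j \<xi> x)"
  shows "wsemi U f j \<eta> \<xi> \<le> wsemi U f j \<eta> \<zeta> + wsemi U f j \<zeta> \<xi>"
  unfolding wsemi_def
proof (rule SUP_least)
  fix x assume x: "x \<in> U"
  obtain C1 where C1: "\<forall>h\<in>unit_dirs j. norm (hderiv j \<eta> x h - hderiv j \<zeta> x h) \<le> C1"
    using multilin_bounded_diff_bounded[OF assms(1,2)[OF x]] by blast
  obtain C2 where C2: "\<forall>h\<in>unit_dirs j. norm (hderiv j \<zeta> x h - hderiv j \<xi> x h) \<le> C2"
    using multilin_bounded_diff_bounded[OF assms(2,3)[OF x]] by blast
  have "0 \<le> hderiv_dist j \<eta> x \<zeta> x" "0 \<le> hderiv_dist j \<zeta> x \<xi> x"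
    using C1 C2 by (blast intro: mnorm_nonneg)+
  have "hderiv_dist j \<eta> x \<xi> x \<le> hderiv_dist j \<eta> x \<zeta> x + hderiv_dist j \<zeta> x \<xi> x"
    by (rule mnorm_diff_triangle) (use C1 C2 in blast)+
  then have "\<bar>f x\<bar> * ereal (hderiv_dist j \<eta> x \<xi> x)
      \<le> \<bar>f x\<bar> * ereal (hderiv_dist j \<eta> x \<zeta> x + hderiv_dist j \<zeta> x \<xi> x)"
    by (intro ereal_mult_left_mono) auto
  also have "\<dots> = \<bar>f x\<bar> * ereal (hderiv_dist j \<eta> x \<zeta> x) + \<bar>f x\<bar> * ereal (hderiv_dist j \<zeta> x \<xi> x)"
    using ereal_right_distrib[of "ereal (hderiv_dist j \<eta> x \<zeta> x)" "ereal (hderiv_dist j \<zeta> x \<xi> x)" "\<bar>f x\<bar>"]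
      \<open>0 \<le> hderiv_dist j \<eta> x \<zeta> x\<close> \<open>0 \<le> hderiv_dist j \<zeta> x \<xi> x\<close>
    by simp
  also have "\<dots> \<le> (SUP x\<in>U. \<bar>f x\<bar> * ereal (hderiv_dist j \<eta> x \<zeta> x))
      + (SUP x\<in>U. \<bar>f x\<bar> * ereal (hderiv_dist j \<zeta> x \<xi> x))"
    by (intro add_mono SUP_upper x)
  finally show "\<bar>f x\<bar> * ereal (hderiv_dist j \<eta> x \<xi> x)
      \<le> (SUP x\<in>U. \<bar>f x\<bar> * ereal (hderiv_dist j \<eta> x \<zeta> x))
        + (SUP x\<in>U. \<bar>f x\<bar> * ereal (hderiv_dist j \<zeta> x \<xi> x))" .
qed

section \<open>The topology of the weighted spaces\<close>

abbreviation CW_ball ::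
    "nat \<Rightarrow> 'a set \<Rightarrow> ('a \<Rightarrow> ereal) set \<Rightarrow> ('a \<Rightarrow> ereal) \<Rightarrow> nat
      \<Rightarrow> ('a::real_normed_vector \<Rightarrow> 'b::real_normed_vector) \<Rightarrow> real \<Rightarrow> ('a \<Rightarrow> 'b) set" where
  "CW_ball m U W f j \<gamma> \<epsilon> \<equiv> {\<eta> \<in> CW m U W. wsemi U f j \<eta> \<gamma> < ereal \<epsilon>}"

abbreviation CW_subbasis ::
    "nat \<Rightarrow> 'a set \<Rightarrow> ('a \<Rightarrow> ereal) set \<Rightarrow> ('a::real_normed_vector \<Rightarrow> 'b::real_normed_vector) set set" where
  "CW_subbasis m U W \<equiv> insert (CW m U W)
     {CW_ball m U W f j \<gamma> \<epsilon> | \<gamma> f j \<epsilon>. \<gamma> \<in> CW m U W \<and> f \<in> W \<and> j \<le> m \<and> \<epsilon> > 0}"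

lemma topspace_CW_top: "topspace (CW_top m U W) = CW m U W"
  unfolding CW_top_def topology_generated_by_topspace by auto

lemma openin_CW_top_ball:
  "\<gamma> \<in> CW m U W \<Longrightarrow> f \<in> W \<Longrightarrow> j \<le> m \<Longrightarrow> \<epsilon> > 0 \<Longrightarrow> openin (CW_top m U W) (CW_ball m U W f j \<gamma> \<epsilon>)"
  unfolding CW_top_def by (rule topology_generated_by_Basis) blast

lemma openin_CW_topI:
  assumes U: "U \<noteq> {}" and P: "P \<subseteq> CW m U W"
    and ball: "\<And>\<gamma>. \<gamma> \<in> P \<Longrightarrow> \<exists>f\<in>W. \<exists>j\<le>m. \<exists>\<delta>>0. CW_ball m U W f j \<gamma> \<delta> \<subseteq> P"
  shows "openin (CW_top m U W) P"
proof (subst openin_subopen, intro ballI)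
  fix \<gamma> assume \<gamma>: "\<gamma> \<in> P"
  obtain f j \<delta> where f: "f \<in> W" "j \<le> m" "\<delta> > 0" and sub: "CW_ball m U W f j \<gamma> \<delta> \<subseteq> P"
    using ball[OF \<gamma>] by blast
  have "openin (CW_top m U W) (CW_ball m U W f j \<gamma> \<delta>)"
    using f \<gamma> P by (intro openin_CW_top_ball) auto
  moreover have "\<gamma> \<in> CW_ball m U W f j \<gamma> \<delta>"
    using \<gamma> P f wsemi_self[OF U, of f j \<gamma>] by (auto simp: zero_ereal_def)
  ultimately show "\<exists>T. openin (CW_top m U W) T \<and> \<gamma> \<in> T \<and> T \<subseteq> P" using sub by blast
qed

lemma openin_CW_top_preimage_ball:
  fixes g :: "('a::real_normed_vector \<Rightarrow> 'b::real_normed_vector) \<Rightarrow> ('a \<Rightarrow> 'c::real_normed_vector)"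
  assumes U: "U \<noteq> {}" and maps: "\<And>\<eta>. \<eta> \<in> CW m U W \<Longrightarrow> g \<eta> \<in> CW m' U W"
    and \<xi>: "\<xi> \<in> CW m' U W" and j: "j \<le> m'" and f: "f \<in> W" and i: "i \<le> m"
    and seminorm: "\<And>\<eta> \<zeta>. \<eta> \<in> CW m U W \<Longrightarrow> \<zeta> \<in> CW m U W \<Longrightarrow> wsemi U f j (g \<eta>) (g \<zeta>) = wsemi U f i \<eta> \<zeta>"
  shows "openin (CW_top m U W) {\<eta> \<in> CW m U W. wsemi U f j (g \<eta>) \<xi> < ereal \<epsilon>}"
proof (rule openin_CW_topI[OF U])
  fix \<zeta> assume "\<zeta> \<in> {\<eta> \<in> CW m U W. wsemi U f j (g \<eta>) \<xi> < ereal \<epsilon>}"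
  then have \<zeta>: "\<zeta> \<in> CW m U W" and lt: "wsemi U f j (g \<zeta>) \<xi> < ereal \<epsilon>" by auto
  have "0 \<le> wsemi U f j (g \<zeta>) \<xi>"
    by (rule wsemi_nonneg[OF U]) (use CW_multilin_bounded maps[OF \<zeta>] \<xi> j in blast)+
  then obtain r where r: "wsemi U f j (g \<zeta>) \<xi> = ereal r" and "r < \<epsilon>"
    using lt by (cases "wsemi U f j (g \<zeta>) \<xi>") auto
  have "CW_ball m U W f i \<zeta> (\<epsilon> - r) \<subseteq> {\<eta> \<in> CW m U W. wsemi U f j (g \<eta>) \<xi> < ereal \<epsilon>}"
  proof safe
    fix \<eta> assume \<eta>: "\<eta> \<in> CW m U W" and near: "wsemi U f i \<eta> \<zeta> < ereal (\<epsilon> - r)"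
    have "wsemi U f j (g \<eta>) \<xi> \<le> wsemi U f j (g \<eta>) (g \<zeta>) + wsemi U f j (g \<zeta>) \<xi>"
      by (rule wsemi_triangle) (use CW_multilin_bounded maps[OF \<eta>] maps[OF \<zeta>] \<xi> j in blast)+
    also have "\<dots> = wsemi U f i \<eta> \<zeta> + ereal r" using seminorm[OF \<eta> \<zeta>] r by simp
    also have "\<dots> < ereal \<epsilon>" using near by (cases "wsemi U f i \<eta> \<zeta>") auto
    finally show "wsemi U f j (g \<eta>) \<xi> < ereal \<epsilon>" .
  qed
  then show "\<exists>f'\<in>W. \<exists>i'\<le>m. \<exists>\<delta>>0. CW_ball m U W f' i' \<zeta> \<delta>
      \<subseteq> {\<eta> \<in> CW m U W. wsemi U f j (g \<eta>) \<xi> < ereal \<epsilon>}"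
    using f i \<open>r < \<epsilon>\<close> by (intro bexI[of _ f] exI[of _ i] conjI exI[of _ "\<epsilon> - r"]) auto
qed blast

lemma continuous_map_CW_topI:
  fixes g :: "('a::real_normed_vector \<Rightarrow> 'b::real_normed_vector) \<Rightarrow> ('a \<Rightarrow> 'c::real_normed_vector)"
  assumes U: "U \<noteq> {}" and maps: "\<And>\<eta>. \<eta> \<in> CW m U W \<Longrightarrow> g \<eta> \<in> CW m' U W"
    and seminorms: "\<And>f j. f \<in> W \<Longrightarrow> j \<le> m' \<Longrightarrow>
      \<exists>i\<le>m. \<forall>\<eta>\<in>CW m U W. \<forall>\<zeta>\<in>CW m U W. wsemi U f j (g \<eta>) (g \<zeta>) = wsemi U f i \<eta> \<zeta>"
  shows "continuous_map (CW_top m U W) (CW_top m' U W) g"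
  unfolding CW_top_def[of m']
proof (rule continuous_on_generated_topo)
  fix V :: "('a \<Rightarrow> 'c) set" assume V: "V \<in> CW_subbasis m' U W"
  show "openin (CW_top m U W) (g -` V \<inter> topspace (CW_top m U W))"
  proof (cases "V = CW m' U W")
    case True
    then have "g -` V \<inter> topspace (CW_top m U W) = topspace (CW_top m U W)"
      using maps by (auto simp: topspace_CW_top)
    then show ?thesis by simp
  next
    case False
    then obtain \<xi> f j \<epsilon> where V_eq: "V = CW_ball m' U W f j \<xi> \<epsilon>"
      and \<xi>: "\<xi> \<in> CW m' U W" "f \<in> W" "j \<le> m'" using V by blast
    obtain i where "i \<le> m" "\<forall>\<eta>\<in>CW m U W. \<forall>\<zeta>\<in>CW m U W. wsemi U f j (g \<eta>) (g \<zeta>) = wsemi U f i \<eta> \<zeta>"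
      using seminorms[OF \<xi>(2,3)] by blast
    then have "openin (CW_top m U W) {\<eta> \<in> CW m U W. wsemi U f j (g \<eta>) \<xi> < ereal \<epsilon>}"
      by (intro openin_CW_top_preimage_ball[OF U maps \<xi>(1,3,2)]) auto
    moreover have "g -` V \<inter> topspace (CW_top m U W) = {\<eta> \<in> CW m U W. wsemi U f j (g \<eta>) \<xi> < ereal \<epsilon>}"
      using maps by (auto simp: topspace_CW_top V_eq)
    ultimately show ?thesis by simp
  qed
qed (use maps in \<open>auto simp: topspace_CW_top\<close>)

lemma continuous_map_Dfun_CW_top:
  assumes U: "open U" "U \<noteq> {}"
  shows "continuous_map (CW_top (Suc k) U W) (CW_top k U W)
    (Dfun :: ('a::real_normed_vector \<Rightarrow> 'b::real_normed_vector) \<Rightarrow> _)"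
proof (rule continuous_map_CW_topI[OF U(2) CW_SucD(1)[OF U(1)]])
  fix f j assume "j \<le> k"
  then show "\<exists>i\<le>Suc k. \<forall>\<eta>\<in>CW (Suc k) U W. \<forall>\<zeta>\<in>CW (Suc k) U W.
      wsemi U f j (Dfun \<eta>) (Dfun \<zeta>) = wsemi U f i \<eta> \<zeta>"
    using wsemi_Suc_eq_wsemi_Dfun[OF U(1)] by fastforce
qed

lemma continuous_map_CW_top_Suc_0:
  assumes U: "open U" "U \<noteq> {}"
  shows "continuous_map (CW_top (Suc k) U W) (CW_top 0 U W)
    (\<lambda>\<eta>::'a::real_normed_vector \<Rightarrow> 'b::real_normed_vector. \<eta>)"
  by (rule continuous_map_CW_topI[OF U(2) CW_SucD(2)[OF U(1)]]) auto

lemma generate_topology_on_image_relatively_open: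
  assumes "generate_topology_on B V" and inj: "inj_on \<phi> C"
    and basis: "\<And>s. s \<in> B \<Longrightarrow> \<exists>T. openin Y T \<and> \<phi> ` (s \<inter> C) = T \<inter> \<phi> ` C"
  shows "\<exists>T. openin Y T \<and> \<phi> ` (V \<inter> C) = T \<inter> \<phi> ` C"
  using assms(1)
proof induction
  case Empty
  show ?case by (intro exI[of _ "{}"]) auto
next
  case (Int a b)
  then obtain Ta Tb where T: "openin Y Ta" "\<phi> ` (a \<inter> C) = Ta \<inter> \<phi> ` C"
      "openin Y Tb" "\<phi> ` (b \<inter> C) = Tb \<inter> \<phi> ` C"
    by blast
  have "\<phi> ` (a \<inter> b \<inter> C) = \<phi> ` (a \<inter> C) \<inter> \<phi> ` (b \<inter> C)"
    using inj_on_image_Int[OF inj, of "a \<inter> C" "b \<inter> C"] by (simp add: Int_ac)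
  then show ?case using T by (intro exI[of _ "Ta \<inter> Tb"]) auto
next
  case (UN K)
  then have "\<forall>A\<in>K. \<exists>T. openin Y T \<and> \<phi> ` (A \<inter> C) = T \<inter> \<phi> ` C" by blast
  then obtain T where T: "\<forall>A\<in>K. openin Y (T A) \<and> \<phi> ` (A \<inter> C) = T A \<inter> \<phi> ` C"
    by (rule bchoice[elim_format]) blast
  then have "\<phi> ` (\<Union>K \<inter> C) = \<Union>(T ` K) \<inter> \<phi> ` C" by blast
  then show ?case using T by (intro exI[of _ "\<Union>(T ` K)"]) auto
next
  case (Basis s)
  then show ?case by (rule basis)
qed

lemma Dfun_pair_image_CW_subbasis:
  fixes W :: "('a::real_normed_vector \<Rightarrow> ereal) set"
  assumes U: "open U" and s: "s \<in> (CW_subbasis (Suc k) U W :: ('a \<Rightarrow> 'b::real_normed_vector) set set)"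
  shows "\<exists>T. openin (prod_topology (CW_top k U W) (CW_top 0 U W)) T \<and>
    (\<lambda>\<eta>. (Dfun \<eta>, \<eta>)) ` (s \<inter> CW (Suc k) U W) = T \<inter> (\<lambda>\<eta>. (Dfun \<eta>, \<eta>)) ` CW (Suc k) U W"
    (is "\<exists>T. openin ?P T \<and> ?\<phi> ` (s \<inter> ?C) = T \<inter> ?\<phi> ` ?C")
proof -
  consider (whole) "s = ?C"
    | (ball) \<gamma> f j \<epsilon> where "s = CW_ball (Suc k) U W f j \<gamma> \<epsilon>"
        "\<gamma> \<in> ?C" "f \<in> W" "j \<le> Suc k" "\<epsilon> > 0"
    using s by blast
  then show ?thesis
  proof cases
    case whole
    then show ?thesis
      using CW_SucD[OF U] by (intro exI[of _ "topspace ?P"] conjI openin_topspace) (auto simp: topspace_CW_top)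
  next
    case (ball \<gamma> f j \<epsilon>)
    show ?thesis
    proof (cases j)
      case 0
      have "openin ?P (topspace (CW_top k U W) \<times> CW_ball 0 U W f 0 \<gamma> \<epsilon>)"
        using CW_SucD(2)[OF U ball(2)] ball by (simp add: openin_prod_Times_iff openin_CW_top_ball)
      moreover have "?\<phi> ` (s \<inter> ?C) = (topspace (CW_top k U W) \<times> CW_ball 0 U W f 0 \<gamma> \<epsilon>) \<inter> ?\<phi> ` ?C"
        using CW_SucD[OF U] unfolding ball(1) 0 by (auto simp: topspace_CW_top)
      ultimately show ?thesis by blast
    next
      case (Suc i)
      have "openin ?P (CW_ball k U W f i (Dfun \<gamma>) \<epsilon> \<times> topspace (CW_top 0 U W))"
        using CW_SucD(1)[OF U ball(2)] ball Suc by (simp add: openin_prod_Times_iff openin_CW_top_ball)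
      moreover have "wsemi U f j \<eta> \<gamma> = wsemi U f i (Dfun \<eta>) (Dfun \<gamma>)" if "\<eta> \<in> ?C" for \<eta>
        using wsemi_Suc_eq_wsemi_Dfun[OF U that ball(2)] ball(4) Suc by simp
      then have "?\<phi> ` (s \<inter> ?C) = (CW_ball k U W f i (Dfun \<gamma>) \<epsilon> \<times> topspace (CW_top 0 U W)) \<inter> ?\<phi> ` ?C"
        using CW_SucD[OF U] unfolding ball(1) by (auto simp: topspace_CW_top)
      ultimately show ?thesis by blast
    qed
  qed
qed

lemma embedding_map_Dfun_pair:
  assumes U: "open U" "U \<noteq> {}"
  shows "embedding_map (CW_top (Suc k) U W) (prod_topology (CW_top k U W) (CW_top 0 U W))
    (\<lambda>\<eta>::'a::real_normed_vector \<Rightarrow> 'b::real_normed_vector. (Dfun \<eta>, \<eta>))"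
  unfolding embedding_map_def
proof (rule bijective_open_imp_homeomorphic_map)
  let ?X = "CW_top (Suc k) U W :: ('a \<Rightarrow> 'b) topology"
  let ?Y = "prod_topology (CW_top k U W :: ('a \<Rightarrow> ('a \<Rightarrow>\<^sub>L 'b)) topology) (CW_top 0 U W)"
  let ?\<phi> = "\<lambda>\<eta>::'a \<Rightarrow> 'b. (Dfun \<eta>, \<eta>)"
  have image: "?\<phi> ` topspace ?X \<subseteq> topspace ?Y"
    using CW_SucD[OF U(1)] by (auto simp: topspace_CW_top)
  show "continuous_map ?X (subtopology ?Y (?\<phi> ` topspace ?X)) ?\<phi>"
    unfolding continuous_map_in_subtopology
    using continuous_map_pairedI[OF continuous_map_Dfun_CW_top[OF U] continuous_map_CW_top_Suc_0[OF U]]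
    by auto
  show "open_map ?X (subtopology ?Y (?\<phi> ` topspace ?X)) ?\<phi>"
    unfolding open_map_def openin_subtopology
  proof (intro allI impI)
    fix V assume V: "openin ?X V"
    then have gen: "generate_topology_on (CW_subbasis (Suc k) U W) V"
      unfolding CW_top_def by (rule openin_topology_generated_by)
    have inj: "inj_on ?\<phi> (CW (Suc k) U W)" by (auto simp: inj_on_def)
    obtain T where "openin ?Y T" and T: "?\<phi> ` (V \<inter> CW (Suc k) U W) = T \<inter> ?\<phi> ` CW (Suc k) U W"
      using generate_topology_on_image_relatively_open[OF gen inj Dfun_pair_image_CW_subbasis[OF U(1)]]
      by blast
    moreover have "V \<inter> CW (Suc k) U W = V" using openin_subset[OF V] by (auto simp: topspace_CW_top)
    ultimately show "\<exists>T. openin ?Y T \<and> ?\<phi> ` V = T \<inter> ?\<phi> ` topspace ?X"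
      unfolding topspace_CW_top by (intro exI[of _ T]) simp
  qed
  show "?\<phi> ` topspace ?X = topspace (subtopology ?Y (?\<phi> ` topspace ?X))"
    using image by (simp add: Int_absorb1)
  show "inj_on ?\<phi> (topspace ?X)" by (auto simp: inj_on_def)
qed

theorem mainTheorem18:
  fixes \<gamma> :: "'a::real_normed_vector \<Rightarrow> 'b::real_normed_vector"
    and U :: "'a set" and W :: "('a \<Rightarrow> ereal) set" and k :: nat
  assumes "open U" and "U \<noteq> {}" and "FC 1 U \<gamma>"
  shows "(\<gamma> \<in> CW (Suc k) U W \<longleftrightarrow> (Dfun \<gamma> \<in> CW k U W \<and> \<gamma> \<in> CW 0 U W))
     \<and> embedding_map (CW_top (Suc k) U W)
          (prod_topology (CW_top k U W) (CW_top 0 U W)) (\<lambda>\<eta>::'a \<Rightarrow> 'b. (Dfun \<eta>, \<eta>))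
     \<and> continuous_map (CW_top (Suc k) U W) (CW_top k U W) (Dfun :: ('a \<Rightarrow> 'b) \<Rightarrow> _)"
  using CW_Suc_iff[OF assms(1,3)] embedding_map_Dfun_pair[OF assms(1,2)]
    continuous_map_Dfun_CW_top[OF assms(1,2)]
  by blast

end
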